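(* Let $\iota:M(\mathbb R(x))\times M(\mathbb R(y))\to M(\mathbb R(x,y))$ be a compatible embedding. Then the topology induced by $\iota$ on $M(\mathbb R(x))\times M(\mathbb R(y))$ is finer than the product topology.
   Context: $x,y$ are algebraically independent over $\mathbb R$. For a field $K$, $M(K)$ is the set of $\mathbb R$-places $K\to\mathbb R\cup\{\infty\}$, with topology generated by the subbasis $H'(b)=\{\zeta\in M(K)\mid \infty\ne\zeta(b)>0\}$, $b\in K$. Let $\rho:M(\mathbb R(x,y))\to M(\mathbb R(x))\times M(\mathbb R(y))$, $\xi\mapsto(\xi|_{\mathbb R(x)},\xi|_{\mathbb R(y)})$; a compatible embedding is an injective map $\iota$ with $\rho\circ\iota=\mathrm{id}$. The induced topology on $M(\mathbb R(x))\times M(\mathbb R(y))$ consists of the preimages under $\iota$ of the sets $U\cap\mathrm{im}(\iota)$, $U$ open in $M(\mathbb R(x,y))$. *)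

theory Defs
  imports "HOL-Analysis.Analysis" "HOL-Computational_Algebra.Computational_Algebra"
    "HOL-Computational_Algebra.Normalized_Fraction" "HOL-Computational_Algebra.Field_as_Ring"
begin

text \<open>Values in \<open>\<real> \<union> {\<infinity>}\<close> are modelled by \<open>real option\<close>, with \<open>None\<close> = \<open>\<infinity>\<close>.\<close>

definition is_place :: "('k::field \<Rightarrow> real option) \<Rightarrow> bool" where
  "is_place \<xi> \<longleftrightarrow>
     \<xi> 1 = Some 1 \<and>
     (\<forall>a b. \<xi> a \<noteq> None \<and> \<xi> b \<noteq> None \<longrightarrow>
        \<xi> (a + b) = Some (the (\<xi> a) + the (\<xi> b)) \<and>
        \<xi> (a * b) = Some (the (\<xi> a) * the (\<xi> b))) \<and>
     (\<forall>a. a \<noteq> 0 \<longrightarrow> (\<xi> a = None \<longleftrightarrow> \<xi> (inverse a) = Some 0))"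

text \<open>The fields: \<open>\<real>(x)\<close> and \<open>\<real>(y)\<close> are both \<open>real poly fract\<close>;
  \<open>\<real>(x,y)\<close> is the fraction field of \<open>\<real>[x][y]\<close>, i.e. \<open>real poly poly fract\<close>
  (outer polynomial variable = y, inner = x).\<close>
type_synonym Rx = "real poly fract"
type_synonym Rxy = "real poly poly fract"

definition emb_x :: "Rx \<Rightarrow> Rxy" where
  "emb_x r = (case quot_of_fract r of (p, q) \<Rightarrow> Fract [:p:] [:q:])"

definition emb_y :: "Rx \<Rightarrow> Rxy" where
  "emb_y r = (case quot_of_fract r of
      (p, q) \<Rightarrow> Fract (map_poly (\<lambda>c. [:c:]) p) (map_poly (\<lambda>c. [:c:]) q))"

definition M_Rx :: "(Rx \<Rightarrow> real option) set" where
  "M_Rx = {\<xi>. is_place \<xi> \<and> (\<forall>c. \<xi> (Fract [:c:] 1) = Some c)}"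

definition M_Rxy :: "(Rxy \<Rightarrow> real option) set" where
  "M_Rxy = {\<xi>. is_place \<xi> \<and> (\<forall>c. \<xi> (Fract [:[:c:]:] 1) = Some c)}"

definition Hprime :: "('k \<Rightarrow> real option) set \<Rightarrow> 'k \<Rightarrow> ('k \<Rightarrow> real option) set" where
  "Hprime M b = {\<zeta> \<in> M. \<exists>r. \<zeta> b = Some r \<and> r > 0}"

definition place_topology :: "('k \<Rightarrow> real option) set \<Rightarrow> ('k \<Rightarrow> real option) topology" where
  "place_topology M = subtopology (topology_generated_by (range (Hprime M))) M"

definition rho :: "(Rxy \<Rightarrow> real option) \<Rightarrow> (Rx \<Rightarrow> real option) \<times> (Rx \<Rightarrow> real option)" where
  "rho \<xi> = (\<xi> \<circ> emb_x, \<xi> \<circ> emb_y)"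

definition compatible_embedding ::
  "((Rx \<Rightarrow> real option) \<times> (Rx \<Rightarrow> real option) \<Rightarrow> (Rxy \<Rightarrow> real option)) \<Rightarrow> bool" where
  "compatible_embedding \<iota> \<longleftrightarrow>
     \<iota> ` (M_Rx \<times> M_Rx) \<subseteq> M_Rxy \<and> inj_on \<iota> (M_Rx \<times> M_Rx) \<and>
     (\<forall>p \<in> M_Rx \<times> M_Rx. rho (\<iota> p) = p)"

definition induced_topology ::
  "((Rx \<Rightarrow> real option) \<times> (Rx \<Rightarrow> real option) \<Rightarrow> (Rxy \<Rightarrow> real option))
     \<Rightarrow> ((Rx \<Rightarrow> real option) \<times> (Rx \<Rightarrow> real option)) topology" where
  "induced_topology \<iota> = topology (\<lambda>W. \<exists>U. openin (place_topology M_Rxy) U \<and>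
        W = {p \<in> M_Rx \<times> M_Rx. \<iota> p \<in> U \<inter> \<iota> ` (M_Rx \<times> M_Rx)})"

end

theory Submission
  imports Defs
begin

text \<open>The induced topology is the pullback of the topology of \<open>M(\<real>(x,y))\<close> along \<open>\<iota>\<close>, and
  \<open>\<rho> \<circ> \<iota> = id\<close> says that the two coordinates of \<open>p\<close> are the restrictions of \<open>\<iota> p\<close> to
  \<open>\<real>(x)\<close> and \<open>\<real>(y)\<close>. Restriction pulls the subbasic set \<open>H'(b)\<close> back to \<open>H'(b)\<close>, with \<open>b\<close>
  read in the larger field, so both coordinate projections are continuous for the induced
  topology, hence so is the identity into the product topology.\<close>

lemma place_in_Hprime_one: "\<zeta> \<in> M \<Longrightarrow> is_place \<zeta> \<Longrightarrow> \<zeta> \<in> Hprime M 1"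
  by (simp add: Hprime_def is_place_def)

lemma topspace_place_topology:
  assumes "\<And>\<zeta>. \<zeta> \<in> M \<Longrightarrow> is_place \<zeta>"
  shows "topspace (place_topology M) = M"
  using assms place_in_Hprime_one by (fastforce simp: place_topology_def)

lemma openin_place_topology_Hprime: "openin (place_topology M) (Hprime M b)"
  unfolding place_topology_def openin_subtopology
  by (rule exI[of _ "Hprime M b"]) (auto simp: topology_generated_by_Basis Hprime_def)

lemma continuous_map_into_place_topology:
  assumes places: "\<And>\<zeta>. \<zeta> \<in> M \<Longrightarrow> is_place \<zeta>"
    and into: "\<And>x. x \<in> topspace X \<Longrightarrow> f x \<in> M"
    and open_pre: "\<And>b. openin X {x \<in> topspace X. f x \<in> Hprime M b}"
  shows "continuous_map X (place_topology M) f"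
  unfolding place_topology_def continuous_map_in_subtopology
proof (intro conjI continuous_on_generated_topo)
  fix U assume "U \<in> range (Hprime M)"
  then obtain b where "U = Hprime M b" by blast
  then show "openin X (f -` U \<inter> topspace X)"
    using open_pre[of b] by (simp add: Int_commute Collect_conj_eq vimage_def)
next
  show "f ` topspace X \<subseteq> \<Union> (range (Hprime M))"
    using into places place_in_Hprime_one by blast
qed (use into in auto)

lemma induced_topology_eq_pullback:
  "induced_topology \<iota> = pullback_topology (M_Rx \<times> M_Rx) \<iota> (place_topology M_Rxy)"
proof -
  have "{p \<in> M_Rx \<times> M_Rx. \<iota> p \<in> U \<inter> \<iota> ` (M_Rx \<times> M_Rx)} = \<iota> -` U \<inter> M_Rx \<times> M_Rx" for U
    by auto
  then show ?thesis
    by (simp add: induced_topology_def pullback_topology_def)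
qed

lemma continuous_map_pullback_restriction:
  fixes \<iota> :: "'a \<Rightarrow> ('k::field \<Rightarrow> real option)" and e :: "'j::field \<Rightarrow> 'k"
  assumes places_N: "\<And>\<xi>. \<xi> \<in> N \<Longrightarrow> is_place \<xi>"
    and places_M: "\<And>\<zeta>. \<zeta> \<in> M \<Longrightarrow> is_place \<zeta>"
    and into_N: "\<And>p. p \<in> A \<Longrightarrow> \<iota> p \<in> N"
    and into_M: "\<And>p. p \<in> A \<Longrightarrow> h p \<in> M"
    and restrict: "\<And>p. p \<in> A \<Longrightarrow> \<iota> p \<circ> e = h p"
  shows "continuous_map (pullback_topology A \<iota> (place_topology N)) (place_topology M) h"
proof (rule continuous_map_into_place_topology[OF places_M])
  have top: "topspace (pullback_topology A \<iota> (place_topology N)) = A"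
    using into_N by (auto simp: topspace_pullback_topology topspace_place_topology places_N)
  then show "h p \<in> M" if "p \<in> topspace (pullback_topology A \<iota> (place_topology N))" for p
    using into_M that by blast
  fix b
  have "h p b = \<iota> p (e b)" if "p \<in> A" for p
    using restrict[OF that] by (metis comp_apply)
  then have "{p \<in> A. h p \<in> Hprime M b} = \<iota> -` Hprime N (e b) \<inter> A"
    using into_N into_M by (auto simp: Hprime_def)
  then show "openin (pullback_topology A \<iota> (place_topology N))
      {p \<in> topspace (pullback_topology A \<iota> (place_topology N)). h p \<in> Hprime M b}"
    by (auto simp: top openin_pullback_topology intro: openin_place_topology_Hprime)
qed

lemma compatible_embedding_restrict:
  assumes "compatible_embedding \<iota>" "p \<in> M_Rx \<times> M_Rx"
  shows "\<iota> p \<circ> emb_x = fst p" "\<iota> p \<circ> emb_y = snd p"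
  using assms by (auto simp: compatible_embedding_def rho_def dest!: bspec[of _ _ p])

lemma places_M_Rx: "\<zeta> \<in> M_Rx \<Longrightarrow> is_place \<zeta>"
  and places_M_Rxy: "\<xi> \<in> M_Rxy \<Longrightarrow> is_place \<xi>"
  by (simp_all add: M_Rx_def M_Rxy_def)

theorem theorem7p6:
  assumes "compatible_embedding \<iota>"
  shows "\<forall>W. openin (prod_topology (place_topology M_Rx) (place_topology M_Rx)) W
           \<longrightarrow> openin (induced_topology \<iota>) W"
proof (intro allI impI)
  fix W assume W: "openin (prod_topology (place_topology M_Rx) (place_topology M_Rx)) W"
  have into: "\<iota> p \<in> M_Rxy" if "p \<in> M_Rx \<times> M_Rx" for p
    using assms that by (auto simp: compatible_embedding_def)
  have "continuous_map (induced_topology \<iota>) (place_topology M_Rx) fst"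
    "continuous_map (induced_topology \<iota>) (place_topology M_Rx) snd"
    unfolding induced_topology_eq_pullback
    by (auto intro!: continuous_map_pullback_restriction places_M_Rx places_M_Rxy into
        compatible_embedding_restrict[OF assms])
  then have "continuous_map (induced_topology \<iota>)
      (prod_topology (place_topology M_Rx) (place_topology M_Rx)) id"
    by (simp add: continuous_map_pairwise)
  then have "openin (induced_topology \<iota>) {p \<in> topspace (induced_topology \<iota>). id p \<in> W}"
    using W by (rule openin_continuous_map_preimage)
  moreover have "topspace (induced_topology \<iota>) = M_Rx \<times> M_Rx"
    using into by (auto simp: induced_topology_eq_pullback topspace_pullback_topology
        topspace_place_topology places_M_Rxy)
  moreover have "W \<subseteq> M_Rx \<times> M_Rx"
    using openin_subset[OF W] by (simp add: topspace_place_topology places_M_Rx)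
  ultimately show "openin (induced_topology \<iota>) W"
    by (simp add: Collect_mem_eq inf.absorb_iff2 Int_def[symmetric])
qed

end
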